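(* Let $q\equiv 3 \pmod 4$ be a prime power and let $P=\{(x,y,z)\in\mathbb{F}_q^3 : z=x^2+y^2\}$. There are absolute constants $C,c>0$ such that for every set $X\subset P$ with $|X|\ge C q^{5/3}$ we have \[\mathcal{E}_{\mathtt{nt}}^+(X)\ge c\,\frac{|X|^4}{q^3}.\]
   Context: For $X\subset P$, $\mathcal{E}_{\mathtt{nt}}^+(X)$ denotes the number of non-trivial energy tuples in $X$, i.e. the number of tuples $(a,b,c,d)\in X^4$ with $a+b=c+d$ and $a,b,c,d$ pairwise distinct. The paper writes $|X|\gg q^{5/3}$ and $\gg$ for inequalities up to absolute positive constants. *)

theory Defs
  imports Complex_Main "HOL-Algebra.Ring"
begin

definition paraboloid :: "('a, 'b) ring_scheme \<Rightarrow> ('a \<times> 'a \<times> 'a) set" where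
  "paraboloid R = {(x, y, z). x \<in> carrier R \<and> y \<in> carrier R \<and> z \<in> carrier R \<and>
                     z = x \<otimes>\<^bsub>R\<^esub> x \<oplus>\<^bsub>R\<^esub> y \<otimes>\<^bsub>R\<^esub> y}"

definition vadd3 :: "('a, 'b) ring_scheme \<Rightarrow> 'a \<times> 'a \<times> 'a \<Rightarrow> 'a \<times> 'a \<times> 'a \<Rightarrow> 'a \<times> 'a \<times> 'a" where
  "vadd3 R u v = (fst u \<oplus>\<^bsub>R\<^esub> fst v,
                  fst (snd u) \<oplus>\<^bsub>R\<^esub> fst (snd v),
                  snd (snd u) \<oplus>\<^bsub>R\<^esub> snd (snd v))"

definition nt_energy :: "('a, 'b) ring_scheme \<Rightarrow> ('a \<times> 'a \<times> 'a) set \<Rightarrow> nat" where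
  "nt_energy R X = card {(a, b, c, d). a \<in> X \<and> b \<in> X \<and> c \<in> X \<and> d \<in> X \<and>
                     vadd3 R a b = vadd3 R c d \<and> distinct [a, b, c, d]}"

end

theory Submission
  imports Defs "HOL-Analysis.Convex"
begin

text \<open>
  Cauchy--Schwarz over the fibres of \<open>(a, b) \<mapsto> a + b\<close> in \<open>F_q^3\<close> gives at least
  \<open>|X|^4 / q^3\<close> solutions of \<open>a + b = c + d\<close> in \<open>X\<close>. By cancellation a degenerate solution
  has \<open>a = b\<close>, \<open>c = d\<close> or \<open>{a, b} = {c, d}\<close>, so there are at most \<open>4 |X|^2\<close> of them, which is
  at most half of \<open>|X|^4 / q^3\<close> once \<open>|X|^2 \<ge> 8 q^3\<close>; this holds for \<open>|X| \<ge> 3 q^(5/3)\<close>.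
\<close>

lemma card_sq_le_card_mult_card_collisions:
  assumes "finite A" "finite S" "g ` A \<subseteq> S"
  shows "card A ^ 2 \<le> card S * card {(x, y) \<in> A \<times> A. g x = g y}"
proof -
  define fiber where "fiber s = {x \<in> A. g x = s}" for s
  have fin_fiber: "finite (fiber s)" for s
    using assms(1) by (simp add: fiber_def)
  have disj: "\<forall>s\<in>S. \<forall>t\<in>S. s \<noteq> t \<longrightarrow> fiber s \<inter> fiber t = {}"
     "\<forall>s\<in>S. \<forall>t\<in>S. s \<noteq> t \<longrightarrow> fiber s \<times> fiber s \<inter> fiber t \<times> fiber t = {}"
    by (auto simp: fiber_def)
  have "A = (\<Union>s\<in>S. fiber s)"
    using assms(3) by (auto simp: fiber_def)
  then have card_A: "card A = (\<Sum>s\<in>S. card (fiber s))"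
    using assms(2) disj(1) fin_fiber by (simp add: card_UN_disjoint)
  have "{(x, y) \<in> A \<times> A. g x = g y} = (\<Union>s\<in>S. fiber s \<times> fiber s)"
    using assms(3) by (auto simp: fiber_def)
  then have card_coll: "card {(x, y) \<in> A \<times> A. g x = g y} = (\<Sum>s\<in>S. card (fiber s) ^ 2)"
    using assms(2) disj(2) fin_fiber
    by (simp add: card_UN_disjoint card_cartesian_product power2_eq_square)
  have "real (\<Sum>s\<in>S. card (fiber s) * 1) ^ 2
      \<le> real (\<Sum>s\<in>S. card (fiber s) ^ 2) * real (\<Sum>s\<in>S. 1 ^ 2)"
    using Cauchy_Schwarz_ineq_sum[of "\<lambda>s. real (card (fiber s))" "\<lambda>_. 1" S] by simp
  then have "real (card A ^ 2) \<le> real (card S * card {(x, y) \<in> A \<times> A. g x = g y})"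
    unfolding card_A card_coll by (simp add: mult.commute)
  then show ?thesis
    by (simp only: of_nat_le_iff)
qed

definition energy_tuples :: "('a \<Rightarrow> 'a \<Rightarrow> 'b) \<Rightarrow> 'a set \<Rightarrow> ('a \<times> 'a \<times> 'a \<times> 'a) set" where
  "energy_tuples f X = {(a, b, c, d). a \<in> X \<and> b \<in> X \<and> c \<in> X \<and> d \<in> X \<and> f a b = f c d}"

definition nontrivial_energy_tuples ::
    "('a \<Rightarrow> 'a \<Rightarrow> 'b) \<Rightarrow> 'a set \<Rightarrow> ('a \<times> 'a \<times> 'a \<times> 'a) set" where
  "nontrivial_energy_tuples f X = {(a, b, c, d) \<in> energy_tuples f X. distinct [a, b, c, d]}"

lemma nt_energy_eq_card_nontrivial_energy_tuples:
  "nt_energy R X = card (nontrivial_energy_tuples (vadd3 R) X)"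
  unfolding nt_energy_def nontrivial_energy_tuples_def energy_tuples_def by simp

lemma card_pow4_le_card_mult_card_energy_tuples:
  assumes "finite X" "finite S" "\<And>a b. a \<in> X \<Longrightarrow> b \<in> X \<Longrightarrow> f a b \<in> S"
  shows "card X ^ 4 \<le> card S * card (energy_tuples f X)"
proof -
  let ?pair_to_tuple = "\<lambda>((a, b), (c, d)). (a, b, c, d)"
  let ?collisions = "{(p, p') \<in> (X \<times> X) \<times> (X \<times> X). case_prod f p = case_prod f p'}"
  have "bij_betw ?pair_to_tuple ?collisions (energy_tuples f X)"
    by (rule bij_betwI'; force simp: energy_tuples_def)
  then have "card (energy_tuples f X) = card ?collisions"
    by (simp add: bij_betw_same_card)
  moreover have "card (X \<times> X) ^ 2 \<le> card S * card ?collisions"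
    using assms by (intro card_sq_le_card_mult_card_collisions) auto
  ultimately show ?thesis
    by (simp add: card_cartesian_product power_mult_distrib flip: power_mult)
qed

lemma card_energy_tuples_le:
  assumes "finite X"
    and commute: "\<And>a b. a \<in> X \<Longrightarrow> b \<in> X \<Longrightarrow> f a b = f b a"
    and cancel: "\<And>a b c. a \<in> X \<Longrightarrow> b \<in> X \<Longrightarrow> c \<in> X \<Longrightarrow> f a b = f a c \<Longrightarrow> b = c"
  shows "card (energy_tuples f X) \<le> card (nontrivial_energy_tuples f X) + 4 * card X ^ 2"
proof -
  let ?E = "energy_tuples f X"
  let ?diag_left = "{(a, b, c, d) \<in> ?E. a = b}"
  let ?diag_right = "{(a, b, c, d) \<in> ?E. c = d}"
  let ?same = "(\<lambda>(a, b). (a, b, a, b)) ` (X \<times> X)"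
  let ?swapped = "(\<lambda>(a, b). (a, b, b, a)) ` (X \<times> X)"
  have fin_E: "finite ?E"
    by (rule finite_subset[of _ "X \<times> X \<times> X \<times> X"]) (auto simp: energy_tuples_def assms(1))
  have small_parts: "card ?diag_left \<le> card (X \<times> X)" "card ?diag_right \<le> card (X \<times> X)"
      "card ?same \<le> card (X \<times> X)" "card ?swapped \<le> card (X \<times> X)"
  proof -
    show "card ?diag_left \<le> card (X \<times> X)" "card ?diag_right \<le> card (X \<times> X)"
      by (rule card_inj_on_le[where f = "\<lambda>(a, b, c, d). (a, c)"];
          auto simp: inj_on_def energy_tuples_def assms(1) intro: cancel)+
    show "card ?same \<le> card (X \<times> X)" "card ?swapped \<le> card (X \<times> X)"
      using assms(1) by (blast intro: card_image_le finite_cartesian_product)+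
  qed
  have "?E \<subseteq> nontrivial_energy_tuples f X \<union> ?diag_left \<union> ?diag_right \<union> ?same \<union> ?swapped"
  proof (rule subsetI)
    fix t
    assume "t \<in> ?E"
    then obtain a b c d where t: "t = (a, b, c, d)" and X: "a \<in> X" "b \<in> X" "c \<in> X" "d \<in> X"
      and eq: "f a b = f c d"
      by (auto simp: energy_tuples_def)
    show "t \<in> nontrivial_energy_tuples f X \<union> ?diag_left \<union> ?diag_right \<union> ?same \<union> ?swapped"
    proof (cases "distinct [a, b, c, d] \<or> a = b \<or> c = d")
      case True
      then show ?thesis
        using \<open>t \<in> ?E\<close> by (auto simp: t nontrivial_energy_tuples_def)
    next
      case False
      then have "a = c \<and> b = d \<or> a = d \<and> b = c"
        using X eq by (metis cancel commute distinct_length_2_or_more distinct_singleton)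
      then show ?thesis
        using X by (auto simp: t)
    qed
  qed
  then have "card ?E \<le> card (nontrivial_energy_tuples f X \<union> ?diag_left \<union> ?diag_right \<union> ?same \<union> ?swapped)"
    by (rule card_mono[rotated])
      (auto simp: nontrivial_energy_tuples_def assms(1) intro: finite_subset[OF _ fin_E])
  also have "\<dots> \<le> card (nontrivial_energy_tuples f X) + card ?diag_left + card ?diag_right
      + card ?same + card ?swapped"
    by (meson card_Un_le add_le_mono le_trans order_refl)
  also have "\<dots> \<le> card (nontrivial_energy_tuples f X) + 4 * card (X \<times> X)"
    using small_parts by linarith
  finally show ?thesis
    by (simp add: card_cartesian_product power2_eq_square)
qed

lemma card_pow4_le_card_mult_card_nontrivial_energy_tuples:
  assumes "finite X" "finite S" "\<And>a b. a \<in> X \<Longrightarrow> b \<in> X \<Longrightarrow> f a b \<in> S"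
    and "\<And>a b. a \<in> X \<Longrightarrow> b \<in> X \<Longrightarrow> f a b = f b a"
    and "\<And>a b c. a \<in> X \<Longrightarrow> b \<in> X \<Longrightarrow> c \<in> X \<Longrightarrow> f a b = f a c \<Longrightarrow> b = c"
    and large: "8 * card S \<le> card X ^ 2"
  shows "card X ^ 4 \<le> 2 * card S * card (nontrivial_energy_tuples f X)"
proof -
  let ?n = "card X" and ?s = "card S" and ?N = "card (nontrivial_energy_tuples f X)"
  have "?n ^ 4 \<le> ?s * card (energy_tuples f X)"
    using assms(1-3) by (rule card_pow4_le_card_mult_card_energy_tuples)
  also have "\<dots> \<le> ?s * (?N + 4 * ?n ^ 2)"
    using assms(1,4,5) by (intro mult_left_mono card_energy_tuples_le) auto
  finally have "?n ^ 4 \<le> ?s * ?N + 4 * (?s * ?n ^ 2)"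
    by (simp add: algebra_simps)
  moreover have "8 * (?s * ?n ^ 2) \<le> ?n ^ 4"
    using mult_right_mono[OF large, of "?n ^ 2"] by (simp add: mult.assoc flip: power_add)
  ultimately show ?thesis
    by linarith
qed

context abelian_group
begin

lemma vadd3_closed:
  assumes "u \<in> carrier G \<times> carrier G \<times> carrier G" "v \<in> carrier G \<times> carrier G \<times> carrier G"
  shows "vadd3 G u v \<in> carrier G \<times> carrier G \<times> carrier G"
  using assms by (auto simp: vadd3_def)

lemma vadd3_commute:
  assumes "u \<in> carrier G \<times> carrier G \<times> carrier G" "v \<in> carrier G \<times> carrier G \<times> carrier G"
  shows "vadd3 G u v = vadd3 G v u"
  using assms by (auto simp: vadd3_def a_comm)

lemma vadd3_left_cancel:
  assumes "u \<in> carrier G \<times> carrier G \<times> carrier G" "v \<in> carrier G \<times> carrier G \<times> carrier G"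
    "w \<in> carrier G \<times> carrier G \<times> carrier G" "vadd3 G u v = vadd3 G u w"
  shows "v = w"
  using assms by (auto simp: vadd3_def)

lemma card_pow4_le_nt_energy:
  assumes "finite (carrier G)" "X \<subseteq> carrier G \<times> carrier G \<times> carrier G"
    and "8 * card (carrier G) ^ 3 \<le> card X ^ 2"
  shows "card X ^ 4 \<le> 2 * card (carrier G) ^ 3 * nt_energy G X"
proof -
  let ?S = "carrier G \<times> carrier G \<times> carrier G"
  have card_S: "card ?S = card (carrier G) ^ 3"
    by (simp add: card_cartesian_product power3_eq_cube)
  have "finite ?S"
    using assms(1) by simp
  moreover from assms(2) this have "finite X"
    by (rule finite_subset)
  moreover have "vadd3 G a b \<in> ?S" if "a \<in> X" "b \<in> X" for a b
    using assms(2) that by (intro vadd3_closed) auto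
  moreover have "vadd3 G a b = vadd3 G b a" if "a \<in> X" "b \<in> X" for a b
    using assms(2) that by (intro vadd3_commute) auto
  moreover have "b = c" if "a \<in> X" "b \<in> X" "c \<in> X" "vadd3 G a b = vadd3 G a c" for a b c
    by (rule vadd3_left_cancel[of a b c]) (use assms(2) that in auto)
  ultimately show ?thesis
    unfolding nt_energy_eq_card_nontrivial_energy_tuples card_S[symmetric]
    using assms(3) card_S by (intro card_pow4_le_card_mult_card_nontrivial_energy_tuples) simp_all
qed

end

lemma cube_le_square_of_ge_powr:
  fixes q n :: real
  assumes "1 \<le> q" "3 * q powr (5/3) \<le> n"
  shows "8 * q ^ 3 \<le> n ^ 2"
proof -
  have "q ^ 3 = q powr 3"
    using assms(1) by (simp add: powr_realpow)
  also have "\<dots> \<le> q powr (10/3)"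
    using assms(1) by (intro powr_mono) auto
  also have "\<dots> = (q powr (5/3)) ^ 2"
    by (simp add: power2_eq_square flip: powr_add)
  also have "\<dots> \<le> (n / 3) ^ 2"
    using assms(2) by (intro power_mono) auto
  finally have "9 * q ^ 3 \<le> n ^ 2"
    by (simp add: power_divide)
  moreover have "0 \<le> q ^ 3"
    using assms(1) by simp
  ultimately show ?thesis
    by linarith
qed

lemma paraboloid_subset: "paraboloid R \<subseteq> carrier R \<times> carrier R \<times> carrier R"
  by (auto simp: paraboloid_def)

theorem theorem1p2:
  shows "\<exists>C c :: real. C > 0 \<and> c > 0 \<and>
    (\<forall>(R :: nat ring) X. field R \<and> finite (carrier R) \<and> card (carrier R) mod 4 = 3 \<and>
        X \<subseteq> paraboloid R \<and>
        real (card X) \<ge> C * real (card (carrier R)) powr (5/3) \<longrightarrow>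
        real (nt_energy R X) \<ge> c * real (card X) ^ 4 / real (card (carrier R)) ^ 3)"
proof -
  have "1/2 * real (card X) ^ 4 / real (card (carrier R)) ^ 3 \<le> real (nt_energy R X)"
    if "field R" "finite (carrier R)" "X \<subseteq> paraboloid R"
      and large: "3 * real (card (carrier R)) powr (5/3) \<le> real (card X)"
    for R :: "nat ring" and X
  proof -
    let ?q = "card (carrier R)"
    have group: "abelian_group R"
      using that(1) by (simp add: field_def domain_def cring_def ring_def)
    then have "\<zero>\<^bsub>R\<^esub> \<in> carrier R"
      by (simp add: abelian_group_def abelian_monoid.zero_closed)
    then have "?q \<ge> 1"
      using that(2) by (auto simp: Suc_le_eq card_gt_0_iff)
    with large have "real (8 * ?q ^ 3) \<le> real (card X ^ 2)"
      using cube_le_square_of_ge_powr[of "real ?q" "real (card X)"] by simp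
    then have "8 * ?q ^ 3 \<le> card X ^ 2"
      by (simp only: of_nat_le_iff)
    then have "card X ^ 4 \<le> 2 * ?q ^ 3 * nt_energy R X"
      using that(2,3) paraboloid_subset
      by (intro abelian_group.card_pow4_le_nt_energy[OF group]) auto
    then have "real (card X ^ 4) \<le> real (2 * ?q ^ 3 * nt_energy R X)"
      by (simp only: of_nat_le_iff)
    then show ?thesis
      using \<open>?q \<ge> 1\<close> by (simp add: divide_le_eq mult.commute)
  qed
  then show ?thesis
    by (intro exI[of _ 3] exI[of _ "1/2"]) auto
qed

end
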